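(* Let $f:\mathcal C_n\to\mathbb R$, let $\xi$ be a product probability measure on $\mathcal C_n$, and let $Y\sim\xi$. Then $$\mathbb E|f(Y)-f(\mathbb EY)|\le\sqrt n\,\mathrm{Lip}(f),$$ where $f(\mathbb EY)$ uses the harmonic extension of $f$ to $[-1,1]^n$.
   Context: Notation. $\mathcal C_n=\{-1,1\}^n$. Definitions. $\partial_if(y)=\tfrac12\big(f(y^{i\to1})-f(y^{i\to-1})\big)$, where $y^{i\to\pm1}$ is $y$ with its $i$-th coordinate set to $\pm1$, and $\mathrm{Lip}(f)=\max_{i,y}|\partial_if(y)|$. The harmonic extension of $f$ to $[-1,1]^n$ is its unique multilinear polynomial $\sum_S\hat f(S)\prod_{i\in S}x_i$. *)

theory Defs
  imports "HOL-Probability.Probability"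
begin

text \<open>Points of \<open>\<real>^n\<close> are represented as functions \<open>nat \<Rightarrow> real\<close> that vanish
  outside \<open>{..<n}\<close>. The discrete cube \<open>C_n = {-1,1}^n\<close>:\<close>
definition cube :: "nat \<Rightarrow> (nat \<Rightarrow> real) set" where
  "cube n = {y. (\<forall>i<n. y i = 1 \<or> y i = -1) \<and> (\<forall>i\<ge>n. y i = 0)}"

definition dpart :: "nat \<Rightarrow> ((nat \<Rightarrow> real) \<Rightarrow> real) \<Rightarrow> (nat \<Rightarrow> real) \<Rightarrow> real" where
  "dpart i f y = (f (y(i := 1)) - f (y(i := -1))) / 2"

definition Lip :: "nat \<Rightarrow> ((nat \<Rightarrow> real) \<Rightarrow> real) \<Rightarrow> real" where
  "Lip n f = Max {\<bar>dpart i f y\<bar> | i y. i < n \<and> y \<in> cube n}"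

definition fourier :: "nat \<Rightarrow> ((nat \<Rightarrow> real) \<Rightarrow> real) \<Rightarrow> nat set \<Rightarrow> real" where
  "fourier n f S = (\<Sum>y\<in>cube n. f y * (\<Prod>i\<in>S. y i)) / 2 ^ n"

definition harm_ext :: "nat \<Rightarrow> ((nat \<Rightarrow> real) \<Rightarrow> real) \<Rightarrow> (nat \<Rightarrow> real) \<Rightarrow> real" where
  "harm_ext n f x = (\<Sum>S\<in>Pow {..<n}. fourier n f S * (\<Prod>i\<in>S. x i))"

definition product_measure_on_cube :: "nat \<Rightarrow> (nat \<Rightarrow> real) pmf \<Rightarrow> bool" where
  "product_measure_on_cube n \<xi> \<longleftrightarrow> set_pmf \<xi> \<subseteq> cube n \<and>
     (\<forall>y\<in>cube n. pmf \<xi> y = (\<Prod>i<n. measure_pmf.prob \<xi> {z. z i = y i}))"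

end

theory Submission
  imports Defs
begin

text \<open>Under a product measure with \<open>P(Y\<^sub>i = 1) = p\<^sub>i\<close> the weight of \<open>y\<close> is
  \<open>\<Prod>\<^sub>i (1 + y\<^sub>i \<mu>\<^sub>i)/2\<close> with \<open>\<mu> = \<bbbE>Y\<close>; expanding this product shows that the harmonic
  extension evaluated at \<open>\<mu>\<close> is exactly \<open>\<bbbE>f(Y)\<close>. Integrating out one coordinate at a
  time, a two-point distribution loses at most \<open>p(1-p)(2L)\<^sup>2 \<le> L\<^sup>2\<close> of second moment,
  so \<open>Var f(Y) \<le> n L\<^sup>2\<close>, and Jensen's inequality gives \<open>\<bbbE>|f(Y) - \<bbbE>f(Y)| \<le> \<surd>n L\<close>.\<close>

lemma cube_0: "cube 0 = {\<lambda>_. 0}"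
  by (auto simp: cube_def)

lemma cube_Suc: "cube (Suc n) = (\<lambda>y. y(n := 1)) ` cube n \<union> (\<lambda>y. y(n := -1)) ` cube n"
proof
  show "cube (Suc n) \<subseteq> (\<lambda>y. y(n := 1)) ` cube n \<union> (\<lambda>y. y(n := -1)) ` cube n"
  proof
    fix z assume z: "z \<in> cube (Suc n)"
    have "z(n := 0) \<in> cube n" using z by (auto simp: cube_def less_Suc_eq)
    moreover have "z n = 1 \<or> z n = -1" using z by (auto simp: cube_def)
    moreover have "z = (z(n := 0))(n := z n)" by simp
    ultimately show "z \<in> (\<lambda>y. y(n := 1)) ` cube n \<union> (\<lambda>y. y(n := -1)) ` cube n"
      by (metis UnI1 UnI2 image_eqI)
  qed
qed (auto simp: cube_def less_Suc_eq)

lemma finite_cube: "finite (cube n)"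
  by (induction n) (auto simp: cube_0 cube_Suc)

lemma fun_upd_in_cube_Suc: "y \<in> cube n \<Longrightarrow> s = 1 \<or> s = -1 \<Longrightarrow> y(n := s) \<in> cube (Suc n)"
  unfolding cube_Suc by auto

lemma inj_on_fun_upd_cube: "inj_on (\<lambda>y. y(n := s)) (cube n)"
proof (rule inj_onI)
  fix x y assume "x \<in> cube n" "y \<in> cube n" "x(n := s) = y(n := s)"
  then have "(x(n := s))(n := 0) = (y(n := s))(n := 0)" "x n = 0" "y n = 0"
    by (auto simp: cube_def)
  then show "x = y" by (metis fun_upd_triv fun_upd_upd)
qed

lemma sum_cube_Suc:
  "(\<Sum>z\<in>cube (Suc n). h z) = (\<Sum>y\<in>cube n. h (y(n := 1)) + h (y(n := -1)))"
proof -
  have disj: "(\<lambda>y. y(n := 1)) ` cube n \<inter> (\<lambda>y. y(n := -1)) ` cube n = {}"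
    by (auto dest: fun_cong[where x = n])
  have "(\<Sum>z\<in>cube (Suc n). h z)
      = (\<Sum>z\<in>(\<lambda>y. y(n := 1)) ` cube n. h z) + (\<Sum>z\<in>(\<lambda>y. y(n := -1)) ` cube n. h z)"
    unfolding cube_Suc by (rule sum.union_disjoint) (auto simp: finite_cube disj)
  also have "\<dots> = (\<Sum>y\<in>cube n. h (y(n := 1))) + (\<Sum>y\<in>cube n. h (y(n := -1)))"
    by (simp add: sum.reindex inj_on_fun_upd_cube)
  finally show ?thesis by (simp add: sum.distrib)
qed

definition coord_weight :: "(nat \<Rightarrow> real) \<Rightarrow> nat \<Rightarrow> real \<Rightarrow> real" where
  "coord_weight p i s = (if s = 1 then p i else 1 - p i)"

definition cube_weight :: "(nat \<Rightarrow> real) \<Rightarrow> nat \<Rightarrow> (nat \<Rightarrow> real) \<Rightarrow> real" where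
  "cube_weight p n y = (\<Prod>i<n. coord_weight p i (y i))"

lemma cube_weight_fun_upd_Suc:
  "y \<in> cube n \<Longrightarrow> cube_weight p (Suc n) (y(n := s)) = cube_weight p n y * coord_weight p n s"
  by (simp add: cube_weight_def)

lemma cube_weight_nonneg: "(\<And>i. 0 \<le> p i \<and> p i \<le> 1) \<Longrightarrow> 0 \<le> cube_weight p n y"
  unfolding cube_weight_def coord_weight_def by (rule prod_nonneg) auto

lemma sum_cube_weight: "(\<Sum>y\<in>cube n. cube_weight p n y) = 1"
proof (induction n)
  case (Suc n)
  have "(\<Sum>y\<in>cube (Suc n). cube_weight p (Suc n) y)
      = (\<Sum>y\<in>cube n. cube_weight p n y * (coord_weight p n 1 + coord_weight p n (-1)))"
    unfolding sum_cube_Suc by (rule sum.cong) (auto simp: cube_weight_fun_upd_Suc algebra_simps)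
  also have "\<dots> = 1"
    using Suc by (simp add: coord_weight_def sum_distrib_right[symmetric])
  finally show ?case .
qed (simp add: cube_0 cube_weight_def)

lemma sum_cube_weight_coord:
  "i < n \<Longrightarrow> (\<Sum>y\<in>cube n. cube_weight p n y * y i) = 2 * p i - 1"
proof (induction n)
  case (Suc n)
  have "(\<Sum>y\<in>cube (Suc n). cube_weight p (Suc n) y * y i)
      = (\<Sum>y\<in>cube n. cube_weight p n y * (if i = n then 2 * p n - 1 else y i))"
    unfolding sum_cube_Suc
    by (rule sum.cong) (auto simp: cube_weight_fun_upd_Suc coord_weight_def algebra_simps)
  also have "\<dots> = 2 * p i - 1"
    using Suc by (cases "i = n") (simp_all add: sum_distrib_right[symmetric] sum_cube_weight)
  finally show ?case .
qed simp

lemma sum_Pow_prod_eq_cube_weight: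
  assumes y: "y \<in> cube n" and \<mu>: "\<And>i. i < n \<Longrightarrow> \<mu> i = 2 * p i - 1"
  shows "(\<Sum>S\<in>Pow {..<n}. \<Prod>i\<in>S. y i * \<mu> i) = 2 ^ n * cube_weight p n y"
proof -
  have "(\<Sum>S\<in>Pow {..<n}. \<Prod>i\<in>S. y i * \<mu> i)
      = (\<Sum>S\<in>Pow {..<n}. (\<Prod>i\<in>S. y i * \<mu> i) * (\<Prod>i\<in>{..<n} - S. 1))"
    by simp
  also have "\<dots> = (\<Prod>i<n. y i * \<mu> i + 1)"
    by (rule prod_add[symmetric]) simp
  also have "\<dots> = (\<Prod>i<n. 2 * coord_weight p i (y i))"
  proof (rule prod.cong)
    fix i assume "i \<in> {..<n}"
    with y \<mu>[of i] show "y i * \<mu> i + 1 = 2 * coord_weight p i (y i)"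
      by (auto simp: cube_def coord_weight_def)
  qed simp
  finally show ?thesis by (simp add: prod.distrib cube_weight_def)
qed

lemma harm_ext_at_mean:
  assumes "\<And>i. i < n \<Longrightarrow> \<mu> i = 2 * p i - 1"
  shows "harm_ext n f \<mu> = (\<Sum>y\<in>cube n. cube_weight p n y * f y)"
proof -
  have "harm_ext n f \<mu> = (\<Sum>S\<in>Pow {..<n}. \<Sum>y\<in>cube n. f y * (\<Prod>i\<in>S. y i * \<mu> i) / 2 ^ n)"
    unfolding harm_ext_def fourier_def
    by (auto simp: sum_divide_distrib sum_distrib_right prod.distrib intro!: sum.cong)
  also have "\<dots> = (\<Sum>y\<in>cube n. f y * (\<Sum>S\<in>Pow {..<n}. \<Prod>i\<in>S. y i * \<mu> i) / 2 ^ n)"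
    by (subst sum.swap) (simp add: sum_divide_distrib sum_distrib_left)
  also have "\<dots> = (\<Sum>y\<in>cube n. cube_weight p n y * f y)"
    by (rule sum.cong) (auto simp: sum_Pow_prod_eq_cube_weight assms)
  finally show ?thesis .
qed

lemma weighted_sum_square_sub:
  fixes W g :: "'b \<Rightarrow> real"
  assumes "(\<Sum>y\<in>A. W y) = 1"
  shows "(\<Sum>y\<in>A. W y * (g y - c)\<^sup>2) = (\<Sum>y\<in>A. W y * (g y)\<^sup>2) - 2 * c * (\<Sum>y\<in>A. W y * g y) + c\<^sup>2"
proof -
  have "(\<Sum>y\<in>A. W y * (g y - c)\<^sup>2) = (\<Sum>y\<in>A. W y * (g y)\<^sup>2 - (2 * c) * (W y * g y) + c\<^sup>2 * W y)"
    by (rule sum.cong) (auto simp: power2_eq_square algebra_simps)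
  with assms show ?thesis
    by (simp add: sum.distrib sum_subtractf sum_distrib_left[symmetric])
qed

lemma weighted_sum_abs_le_sqrt:
  fixes W g :: "'b \<Rightarrow> real"
  assumes "\<And>y. y \<in> A \<Longrightarrow> 0 \<le> W y" "(\<Sum>y\<in>A. W y) = 1"
  shows "(\<Sum>y\<in>A. W y * \<bar>g y\<bar>) \<le> sqrt (\<Sum>y\<in>A. W y * (g y)\<^sup>2)"
proof (rule real_le_rsqrt)
  define e where "e = (\<Sum>y\<in>A. W y * \<bar>g y\<bar>)"
  have "0 \<le> (\<Sum>y\<in>A. W y * (\<bar>g y\<bar> - e)\<^sup>2)"
    by (intro sum_nonneg mult_nonneg_nonneg assms) simp_all
  also have "\<dots> = (\<Sum>y\<in>A. W y * (g y)\<^sup>2) - e\<^sup>2"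
    using weighted_sum_square_sub[OF assms(2), of "\<lambda>y. \<bar>g y\<bar>" e]
    by (simp add: e_def power2_eq_square)
  finally show "e\<^sup>2 \<le> (\<Sum>y\<in>A. W y * (g y)\<^sup>2)" by simp
qed

lemma two_point_second_moment_le:
  fixes a u v L :: real
  assumes "0 \<le> a" "a \<le> 1" "\<bar>u - v\<bar> \<le> 2 * L"
  shows "a * u\<^sup>2 + (1 - a) * v\<^sup>2 \<le> (a * u + (1 - a) * v)\<^sup>2 + L\<^sup>2"
proof -
  have "a * (1 - a) \<le> 1 / 4"
    using zero_le_power2[of "a - 1/2"] by (simp add: power2_eq_square algebra_simps)
  moreover have "(u - v)\<^sup>2 \<le> (2 * L)\<^sup>2"
    using assms(3) by (metis abs_ge_zero order_trans power2_abs power_mono)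
  ultimately have "a * (1 - a) * (u - v)\<^sup>2 \<le> 1 / 4 * (2 * L)\<^sup>2"
    using assms by (intro mult_mono) auto
  moreover have "a * u\<^sup>2 + (1 - a) * v\<^sup>2 = (a * u + (1 - a) * v)\<^sup>2 + a * (1 - a) * (u - v)\<^sup>2"
    by (simp add: power2_eq_square algebra_simps)
  ultimately show ?thesis by (simp add: power2_eq_square)
qed

lemma abs_convex_comb_le:
  fixes a x y M :: real
  assumes "0 \<le> a" "a \<le> 1" "\<bar>x\<bar> \<le> M" "\<bar>y\<bar> \<le> M"
  shows "\<bar>a * x + (1 - a) * y\<bar> \<le> M"
proof -
  have "\<bar>a * x + (1 - a) * y\<bar> \<le> a * \<bar>x\<bar> + (1 - a) * \<bar>y\<bar>"
    using assms(1,2) by (metis abs_mult abs_of_nonneg abs_triangle_ineq diff_ge_0_iff_ge)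
  also have "\<dots> \<le> a * M + (1 - a) * M"
    using assms by (intro add_mono mult_left_mono) auto
  finally show ?thesis by (simp add: algebra_simps)
qed

text \<open>Induction on \<open>n\<close>: averaging out the last coordinate yields a function \<open>g\<close> on the
  smaller cube whose discrete derivatives are still bounded by \<open>L\<close>.\<close>

lemma cube_weight_second_moment_le:
  assumes p: "\<And>i. 0 \<le> p i \<and> p i \<le> 1"
    and lip: "\<And>i y. i < n \<Longrightarrow> y \<in> cube n \<Longrightarrow> \<bar>dpart i f y\<bar> \<le> L"
  shows "(\<Sum>y\<in>cube n. cube_weight p n y * (f y)\<^sup>2) \<le> (\<Sum>y\<in>cube n. cube_weight p n y * f y)\<^sup>2 + n * L\<^sup>2"
  using lip
proof (induction n arbitrary: f)
  case 0
  then show ?case by (simp add: cube_0 cube_weight_def)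
next
  case (Suc n)
  define a where "a = p n"
  define g where "g y = a * f (y(n := 1)) + (1 - a) * f (y(n := -1))" for y
  have a: "0 \<le> a" "a \<le> 1" using p by (auto simp: a_def)
  have weight: "coord_weight p n 1 = a" "coord_weight p n (-1) = 1 - a"
    by (auto simp: coord_weight_def a_def)
  have lip_Suc: "\<bar>dpart i f (y(n := s))\<bar> \<le> L" if "i \<le> n" "y \<in> cube n" "s = 1 \<or> s = -1" for i y s
    using that by (intro Suc.prems fun_upd_in_cube_Suc) auto
  have "\<bar>dpart i g y\<bar> \<le> L" if "i < n" "y \<in> cube n" for i y
  proof -
    have "(y(i := t))(n := s) = (y(n := s))(i := t)" for s t
      using \<open>i < n\<close> by (simp add: fun_upd_twist)
    then have "dpart i g y = a * dpart i f (y(n := 1)) + (1 - a) * dpart i f (y(n := -1))"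
      by (simp add: dpart_def g_def field_simps)
    then show ?thesis
      using that by (simp add: abs_convex_comb_le a lip_Suc)
  qed
  then have IH: "(\<Sum>y\<in>cube n. cube_weight p n y * (g y)\<^sup>2)
      \<le> (\<Sum>y\<in>cube n. cube_weight p n y * g y)\<^sup>2 + n * L\<^sup>2"
    by (rule Suc.IH)
  have pointwise: "a * (f (y(n := 1)))\<^sup>2 + (1 - a) * (f (y(n := -1)))\<^sup>2 \<le> (g y)\<^sup>2 + L\<^sup>2"
    if "y \<in> cube n" for y
    using two_point_second_moment_le[OF a] lip_Suc[of n y 1] that
    by (simp add: g_def dpart_def)
  have "(\<Sum>y\<in>cube (Suc n). cube_weight p (Suc n) y * (f y)\<^sup>2)
      = (\<Sum>y\<in>cube n. cube_weight p n y * (a * (f (y(n := 1)))\<^sup>2 + (1 - a) * (f (y(n := -1)))\<^sup>2))"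
    unfolding sum_cube_Suc by (rule sum.cong) (auto simp: cube_weight_fun_upd_Suc weight algebra_simps)
  also have "\<dots> \<le> (\<Sum>y\<in>cube n. cube_weight p n y * ((g y)\<^sup>2 + L\<^sup>2))"
    by (intro sum_mono mult_left_mono pointwise cube_weight_nonneg p)
  also have "\<dots> = (\<Sum>y\<in>cube n. cube_weight p n y * (g y)\<^sup>2) + L\<^sup>2"
    by (simp add: distrib_left sum.distrib sum_distrib_right[symmetric] sum_cube_weight)
  also have "\<dots> \<le> (\<Sum>y\<in>cube n. cube_weight p n y * g y)\<^sup>2 + Suc n * L\<^sup>2"
    using IH by (simp add: algebra_simps)
  also have "(\<Sum>y\<in>cube n. cube_weight p n y * g y)
      = (\<Sum>y\<in>cube (Suc n). cube_weight p (Suc n) y * f y)"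
    unfolding sum_cube_Suc by (rule sum.cong) (auto simp: cube_weight_fun_upd_Suc weight g_def algebra_simps)
  finally show ?case .
qed

lemma cube_weight_abs_dev_le:
  assumes "\<And>i. 0 \<le> p i \<and> p i \<le> 1"
    and "\<And>i y. i < n \<Longrightarrow> y \<in> cube n \<Longrightarrow> \<bar>dpart i f y\<bar> \<le> L" and "0 \<le> L"
  defines "m \<equiv> (\<Sum>y\<in>cube n. cube_weight p n y * f y)"
  shows "(\<Sum>y\<in>cube n. cube_weight p n y * \<bar>f y - m\<bar>) \<le> sqrt n * L"
proof -
  have "(\<Sum>y\<in>cube n. cube_weight p n y * (f y - m)\<^sup>2) = (\<Sum>y\<in>cube n. cube_weight p n y * (f y)\<^sup>2) - m\<^sup>2"
    using weighted_sum_square_sub[OF sum_cube_weight, of p n f m]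
    unfolding m_def[symmetric] by (simp add: power2_eq_square)
  also have "\<dots> \<le> n * L\<^sup>2"
    using cube_weight_second_moment_le[of p n f L, OF assms(1,2)] unfolding m_def[symmetric] by simp
  finally have "(\<Sum>y\<in>cube n. cube_weight p n y * (f y - m)\<^sup>2) \<le> n * L\<^sup>2" .
  then have "sqrt (\<Sum>y\<in>cube n. cube_weight p n y * (f y - m)\<^sup>2) \<le> sqrt n * L"
    using \<open>0 \<le> L\<close> by (metis real_sqrt_abs real_sqrt_le_mono real_sqrt_mult abs_of_nonneg)
  moreover have "(\<Sum>y\<in>cube n. cube_weight p n y * \<bar>f y - m\<bar>)
      \<le> sqrt (\<Sum>y\<in>cube n. cube_weight p n y * (f y - m)\<^sup>2)"
    by (rule weighted_sum_abs_le_sqrt) (simp_all add: cube_weight_nonneg assms(1) sum_cube_weight)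
  ultimately show ?thesis by linarith
qed

lemma dpart_le_Lip: "i < n \<Longrightarrow> y \<in> cube n \<Longrightarrow> \<bar>dpart i f y\<bar> \<le> Lip n f"
proof -
  assume "i < n" "y \<in> cube n"
  have "{\<bar>dpart i f y\<bar> | i y. i < n \<and> y \<in> cube n} \<subseteq> (\<lambda>(i, y). \<bar>dpart i f y\<bar>) ` ({..<n} \<times> cube n)"
    by auto
  then have "finite {\<bar>dpart i f y\<bar> | i y. i < n \<and> y \<in> cube n}"
    by (rule finite_subset) (simp add: finite_cube)
  then show ?thesis unfolding Lip_def by (rule Max_ge) (use \<open>i < n\<close> \<open>y \<in> cube n\<close> in blast)
qed

lemma Lip_nonneg: "0 < n \<Longrightarrow> 0 \<le> Lip n f"
proof -
  assume "0 < n"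
  have "(\<lambda>i. if i < n then 1 else 0) \<in> cube n" by (auto simp: cube_def)
  with \<open>0 < n\<close> show ?thesis by (meson abs_ge_zero dpart_le_Lip order_trans)
qed

lemma product_measure_on_cube_pmf:
  assumes "product_measure_on_cube n \<xi>" and y: "y \<in> cube n"
  defines "p \<equiv> \<lambda>i. measure_pmf.prob \<xi> {z. z i = 1}"
  shows "pmf \<xi> y = cube_weight p n y"
proof -
  have supp: "set_pmf \<xi> \<subseteq> cube n"
    using assms(1) by (simp add: product_measure_on_cube_def)
  have prob_neg: "measure_pmf.prob \<xi> {z. z i = -1} = 1 - p i" if "i < n" for i
  proof -
    have "{z. z i = -1} \<inter> set_pmf \<xi> = (UNIV - {z. z i = 1}) \<inter> set_pmf \<xi>"
      using supp that by (auto simp: cube_def)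
    then have "measure_pmf.prob \<xi> {z. z i = -1} = measure_pmf.prob \<xi> (UNIV - {z. z i = 1})"
      by (metis measure_Int_set_pmf)
    then show ?thesis
      using measure_pmf.prob_compl[of "{z. z i = 1}" \<xi>] by (simp add: p_def)
  qed
  have "pmf \<xi> y = (\<Prod>i<n. measure_pmf.prob \<xi> {z. z i = y i})"
    using assms(1) y by (simp add: product_measure_on_cube_def)
  also have "\<dots> = cube_weight p n y"
    unfolding cube_weight_def
    by (rule prod.cong) (use y prob_neg in \<open>auto simp: cube_def coord_weight_def p_def\<close>)
  finally show ?thesis .
qed

lemma product_measure_on_cube_expectation:
  assumes "product_measure_on_cube n \<xi>"
  defines "p \<equiv> \<lambda>i. measure_pmf.prob \<xi> {z. z i = 1}"
  shows "measure_pmf.expectation \<xi> g = (\<Sum>y\<in>cube n. cube_weight p n y * g y)"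
  using assms(1) product_measure_on_cube_pmf[OF assms(1)]
  by (subst integral_measure_pmf[of "cube n"])
     (auto simp: finite_cube product_measure_on_cube_def p_def)

theorem mainTheorem13:
  fixes n :: nat and f :: "(nat \<Rightarrow> real) \<Rightarrow> real" and \<xi> :: "(nat \<Rightarrow> real) pmf"
  assumes "product_measure_on_cube n \<xi>"
  shows "measure_pmf.expectation \<xi>
           (\<lambda>y. \<bar>f y - harm_ext n f (\<lambda>i. measure_pmf.expectation \<xi> (\<lambda>z. z i))\<bar>)
         \<le> sqrt n * Lip n f"
proof (cases "n = 0")
  case True
  with assms show ?thesis
    by (simp add: product_measure_on_cube_expectation cube_0 cube_weight_def harm_ext_def fourier_def)
next
  case False
  define p where "p = (\<lambda>i. measure_pmf.prob \<xi> {z. z i = 1})"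
  note E = product_measure_on_cube_expectation[OF assms, folded p_def]
  have p_bounds: "0 \<le> p i \<and> p i \<le> 1" for i
    by (simp add: p_def)
  have "harm_ext n f (\<lambda>i. measure_pmf.expectation \<xi> (\<lambda>z. z i))
      = (\<Sum>y\<in>cube n. cube_weight p n y * f y)"
    by (rule harm_ext_at_mean) (simp add: E sum_cube_weight_coord)
  then show ?thesis
    using cube_weight_abs_dev_le[OF p_bounds dpart_le_Lip Lip_nonneg] False by (simp add: E)
qed

end
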